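(* Let $\Sigma\subseteq\Delta\subseteq\mathcal L_{\Diamond\forall}$ with $\Sigma$ finite and both closed under subformulas. Let $\mathfrak W=(W,\preccurlyeq_W,\ell_W)$ be a finite $\Sigma$-labelled frame and $\mathfrak X=(X,\preccurlyeq_X,\ell_X)$ a $\Delta$-labelled frame, and let $w\in W$, $x\in X$. Then: (1) if $\mathrm{Sim}(w)\in\ell_X^-(x)$, then there is $y\succcurlyeq_X x$ such that $(\mathfrak W,w)\rightharpoonup(\mathfrak X,y)$; (2) if there is $y\succcurlyeq_X x$ such that $(\mathfrak W,w)\rightharpoonup(\mathfrak X,y)$, then $\mathrm{Sim}(w)\notin\ell_X^+(x)$.
   Context: $\mathcal L_{\Diamond\forall}$: formulas $\varphi::=\bot\mid p\mid\varphi\wedge\varphi\mid\varphi\vee\varphi\mid\varphi\to\varphi\mid\circ\varphi\mid\Diamond\varphi\mid\forall\varphi$, $p$ ranging over propositional variables; $\top:=\bot\to\bot$, $\bigwedge\varnothing=\top$, $\bigvee\varnothing=\bot$. For $\Sigma$ closed under subformulas, a (two-sided) $\Sigma$-type is a pair $\Phi=(\Phi^+,\Phi^-)$ of finite subsets of $\Sigma$ such that: (1) $\Phi^-\cap\Phi^+=\varnothing$; (2) $\bot\notin\Phi^+$; (3) $\varphi\wedge\psi\in\Phi^+\Rightarrow\varphi,\psi\in\Phi^+$; (4) $\varphi\wedge\psi\in\Phi^-\Rightarrow\varphi\in\Phi^-$ or $\psi\in\Phi^-$; (5) $\varphi\vee\psi\in\Phi^+\Rightarrow\varphi\in\Phi^+$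 or $\psi\in\Phi^+$; (6) $\varphi\vee\psi\in\Phi^-\Rightarrow\varphi,\psi\in\Phi^-$; (7) $\varphi\to\psi\in\Phi^+\Rightarrow\varphi\in\Phi^-$ or $\psi\in\Phi^+$; (8) $\varphi\to\psi\in\Phi^-\Rightarrow\psi\in\Phi^-$; (9) $\Diamond\varphi\in\Phi^-\Rightarrow\varphi\in\Phi^-$. Write $\Phi\preccurlyeq_T\Psi$ if $\Phi^+\subseteq\Psi^+$ and $\Psi^-\subseteq\Phi^-$, and $\Phi\subseteq_T\Psi$ if $\Phi^+\subseteq\Psi^+$ and $\Phi^-\subseteq\Psi^-$. A $\Sigma$-labelled frame is $(W,\preccurlyeq,\ell)$ with $\preccurlyeq$ a partial order on $W$ and $\ell$ mapping each $w$ to a $\Sigma$-type $\ell(w)=(\ell^+(w),\ell^-(w))$ such that $w\preccurlyeq v$ implies $\ell(w)\preccurlyeq_T\ell(v)$, and whenever $\varphi\to\psi\in\ell^-(w)$ there is $v\succcurlyeq w$ with $\varphi\in\ell^+(v)$ and $\psi\in\ell^-(v)$. A simulation from a $\Sigma$-labelled frame $\mathfrak W$ to a $\Delta$-labelled frame $\mathfrak X$ is a relation $E\subseteq W\times X$ that is forward confluent (if $w\mathrel E y$ and $w\preccurlyeq w'$ then there is $y'\succcurlyeq y$ with $w'\mathrel E y'$) and such that $w\mathrel Ey$ implies $\ell_W(w)\subseteq_T\ell_X(y)$; $(\mathfrak W,w)\rightharpoonup(\mathfrak X,y)$ means some simulation $E$ has $w\mathrel Ey$. For finite $\mathfrak W$,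 $\mathrm{Sim}(w)$ is defined by backward induction on $\preccurlyeq_W$: $\mathrm{Sim}(w)=\bigwedge\ell_W^+(w)\to\bigvee\ell_W^-(w)\vee\bigvee_{v\succ w}\mathrm{Sim}(v)$, where $v\succ w$ means $w\preccurlyeq v$ and $v\neq w$. *)

theory Defs
  imports Main
begin

datatype form =
    Bot
  | Var nat
  | And form form
  | Or form form
  | Imp form form
  | Next form
  | Dia form
  | Univ form

definition Top :: form where "Top = Imp Bot Bot"

fun subf :: "form \<Rightarrow> form set" where
  "subf Bot = {Bot}"
| "subf (Var p) = {Var p}"
| "subf (And a b) = insert (And a b) (subf a \<union> subf b)"
| "subf (Or a b) = insert (Or a b) (subf a \<union> subf b)"
| "subf (Imp a b) = insert (Imp a b) (subf a \<union> subf b)"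
| "subf (Next a) = insert (Next a) (subf a)"
| "subf (Dia a) = insert (Dia a) (subf a)"
| "subf (Univ a) = insert (Univ a) (subf a)"

definition subf_closed :: "form set \<Rightarrow> bool" where
  "subf_closed S \<longleftrightarrow> (\<forall>\<phi>\<in>S. subf \<phi> \<subseteq> S)"

fun bigconj :: "form list \<Rightarrow> form" where
  "bigconj [] = Top"
| "bigconj [a] = a"
| "bigconj (a # as) = And a (bigconj as)"

fun bigdisj :: "form list \<Rightarrow> form" where
  "bigdisj [] = Bot"
| "bigdisj [a] = a"
| "bigdisj (a # as) = Or a (bigdisj as)"

(* a fixed enumeration of a finite set (the bracketing/order of the big
   connectives is an arbitrary but fixed convention) *)
definition enum_set :: "'a set \<Rightarrow> 'a list" where
  "enum_set A = (SOME xs. set xs = A \<and> distinct xs)"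

type_synonym ftype = "form set \<times> form set"

definition is_type :: "form set \<Rightarrow> ftype \<Rightarrow> bool" where
  "is_type S T \<longleftrightarrow> (let P = fst T; N = snd T in
     finite P \<and> finite N \<and> P \<subseteq> S \<and> N \<subseteq> S \<and>
     N \<inter> P = {} \<and>
     Bot \<notin> P \<and>
     (\<forall>a b. And a b \<in> P \<longrightarrow> a \<in> P \<and> b \<in> P) \<and>
     (\<forall>a b. And a b \<in> N \<longrightarrow> a \<in> N \<or> b \<in> N) \<and>
     (\<forall>a b. Or a b \<in> P \<longrightarrow> a \<in> P \<or> b \<in> P) \<and>
     (\<forall>a b. Or a b \<in> N \<longrightarrow> a \<in> N \<and> b \<in> N) \<and>
     (\<forall>a b. Imp a b \<in> P \<longrightarrow> a \<in> N \<or> b \<in> P) \<and>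
     (\<forall>a b. Imp a b \<in> N \<longrightarrow> b \<in> N) \<and>
     (\<forall>a. Dia a \<in> N \<longrightarrow> a \<in> N))"

definition type_le :: "ftype \<Rightarrow> ftype \<Rightarrow> bool" where
  "type_le A B \<longleftrightarrow> fst A \<subseteq> fst B \<and> snd B \<subseteq> snd A"

definition type_sub :: "ftype \<Rightarrow> ftype \<Rightarrow> bool" where
  "type_sub A B \<longleftrightarrow> fst A \<subseteq> fst B \<and> snd A \<subseteq> snd B"

definition labelled_frame ::
  "form set \<Rightarrow> 'w set \<Rightarrow> ('w \<Rightarrow> 'w \<Rightarrow> bool) \<Rightarrow> ('w \<Rightarrow> ftype) \<Rightarrow> bool" where
  "labelled_frame S W le lab \<longleftrightarrow>
     (\<forall>w\<in>W. le w w) \<and>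
     (\<forall>u\<in>W. \<forall>v\<in>W. \<forall>w\<in>W. le u v \<and> le v w \<longrightarrow> le u w) \<and>
     (\<forall>u\<in>W. \<forall>v\<in>W. le u v \<and> le v u \<longrightarrow> u = v) \<and>
     (\<forall>w\<in>W. is_type S (lab w)) \<and>
     (\<forall>w\<in>W. \<forall>v\<in>W. le w v \<longrightarrow> type_le (lab w) (lab v)) \<and>
     (\<forall>w\<in>W. \<forall>a b. Imp a b \<in> snd (lab w) \<longrightarrow>
        (\<exists>v\<in>W. le w v \<and> a \<in> fst (lab v) \<and> b \<in> snd (lab v)))"

definition simulation ::
  "'w set \<Rightarrow> ('w \<Rightarrow> 'w \<Rightarrow> bool) \<Rightarrow> ('w \<Rightarrow> ftype) \<Rightarrow>
   'x set \<Rightarrow> ('x \<Rightarrow> 'x \<Rightarrow> bool) \<Rightarrow> ('x \<Rightarrow> ftype) \<Rightarrow> ('w \<times> 'x) set \<Rightarrow> bool" where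
  "simulation W leW labW X leX labX E \<longleftrightarrow>
     E \<subseteq> W \<times> X \<and>
     (\<forall>w y w'. (w, y) \<in> E \<and> w' \<in> W \<and> leW w w' \<longrightarrow>
        (\<exists>y'\<in>X. leX y y' \<and> (w', y') \<in> E)) \<and>
     (\<forall>(w, y)\<in>E. type_sub (labW w) (labX y))"

definition simulates ::
  "'w set \<Rightarrow> ('w \<Rightarrow> 'w \<Rightarrow> bool) \<Rightarrow> ('w \<Rightarrow> ftype) \<Rightarrow> 'w \<Rightarrow>
   'x set \<Rightarrow> ('x \<Rightarrow> 'x \<Rightarrow> bool) \<Rightarrow> ('x \<Rightarrow> ftype) \<Rightarrow> 'x \<Rightarrow> bool" where
  "simulates W leW labW w X leX labX y \<longleftrightarrow>
     (\<exists>E. simulation W leW labW X leX labX E \<and> (w, y) \<in> E)"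

(* Sim by backward induction, implemented with fuel; with fuel card W it
   agrees with the backward-inductive definition on a finite poset *)
fun sim_aux :: "nat \<Rightarrow> 'w set \<Rightarrow> ('w \<Rightarrow> 'w \<Rightarrow> bool) \<Rightarrow> ('w \<Rightarrow> ftype) \<Rightarrow> 'w \<Rightarrow> form" where
  "sim_aux 0 W le lab w =
     Imp (bigconj (enum_set (fst (lab w))))
         (Or (bigdisj (enum_set (snd (lab w)))) (bigdisj []))"
| "sim_aux (Suc n) W le lab w =
     Imp (bigconj (enum_set (fst (lab w))))
         (Or (bigdisj (enum_set (snd (lab w))))
             (bigdisj (map (sim_aux n W le lab) (enum_set {v\<in>W. le w v \<and> v \<noteq> w}))))"

definition Sim :: "'w set \<Rightarrow> ('w \<Rightarrow> 'w \<Rightarrow> bool) \<Rightarrow> ('w \<Rightarrow> ftype) \<Rightarrow> 'w \<Rightarrow> form" where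
  "Sim W le lab w = sim_aux (card W) W le lab w"

end

theory Submission
  imports Defs
begin

text \<open>
  If \<open>Sim(w) = \<And>\<Phi>\<^sup>+ \<rightarrow> \<Or>\<Phi>\<^sup>- \<or> \<Or>\<^sub>v\<^sub>\<succ>\<^sub>w Sim(v)\<close> lies in \<open>\<ell>\<^sup>-(x)\<close>, the frame condition on
  implications yields \<open>y \<succcurlyeq> x\<close> whose label contains that of \<open>w\<close> and which refutes every
  \<open>Sim(v)\<close> with \<open>v \<succ> w\<close>; by induction each such \<open>v\<close> is simulated above \<open>y\<close>, and these
  simulations glue together with the pair \<open>(w, y)\<close>. Conversely, if \<open>y\<close> simulates \<open>w\<close> and
  \<open>Sim(w) \<in> \<ell>\<^sup>+(y)\<close>, the type conditions rule out every disjunct except some \<open>Sim(v)\<close>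
  with \<open>v \<succ> w\<close>; forward confluence and monotonicity carry it to a world \<open>y' \<succcurlyeq> y\<close>
  simulating \<open>v\<close>, contradicting the induction hypothesis. Both inductions run on the fuel
  of \<^const>\<open>sim_aux\<close>, which is adequate as long as it bounds the size of the up-set of \<open>w\<close>.
\<close>

lemma set_enum_set: "finite A \<Longrightarrow> set (enum_set A) = A"
  unfolding enum_set_def by (metis (mono_tags, lifting) finite_distinct_list someI_ex)

lemma is_type_finite: "is_type S T \<Longrightarrow> finite (fst T) \<and> finite (snd T)"
  unfolding is_type_def Let_def by blast

lemma is_type_disjoint: "is_type S T \<Longrightarrow> snd T \<inter> fst T = {}"
  unfolding is_type_def Let_def by blast

lemma is_type_Bot_notin_pos: "is_type S T \<Longrightarrow> Bot \<notin> fst T"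
  unfolding is_type_def Let_def by blast

lemma is_type_pos_And: "is_type S T \<Longrightarrow> And a b \<in> fst T \<Longrightarrow> a \<in> fst T \<and> b \<in> fst T"
  unfolding is_type_def Let_def by blast

lemma is_type_neg_And: "is_type S T \<Longrightarrow> And a b \<in> snd T \<Longrightarrow> a \<in> snd T \<or> b \<in> snd T"
  unfolding is_type_def Let_def by blast

lemma is_type_pos_Or: "is_type S T \<Longrightarrow> Or a b \<in> fst T \<Longrightarrow> a \<in> fst T \<or> b \<in> fst T"
  unfolding is_type_def Let_def by blast

lemma is_type_neg_Or: "is_type S T \<Longrightarrow> Or a b \<in> snd T \<Longrightarrow> a \<in> snd T \<and> b \<in> snd T"
  unfolding is_type_def Let_def by blast

lemma is_type_pos_Imp: "is_type S T \<Longrightarrow> Imp a b \<in> fst T \<Longrightarrow> a \<in> snd T \<or> b \<in> fst T"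
  unfolding is_type_def Let_def by blast

lemma bigconj_in_pos: "is_type S T \<Longrightarrow> bigconj xs \<in> fst T \<Longrightarrow> set xs \<subseteq> fst T"
  by (induction xs rule: bigconj.induct) (auto dest: is_type_pos_And)

lemma bigconj_in_neg:
  "is_type S T \<Longrightarrow> xs \<noteq> [] \<Longrightarrow> bigconj xs \<in> snd T \<Longrightarrow> \<exists>a\<in>set xs. a \<in> snd T"
  by (induction xs rule: bigconj.induct) (auto dest: is_type_neg_And)

lemma bigdisj_in_pos: "is_type S T \<Longrightarrow> bigdisj xs \<in> fst T \<Longrightarrow> \<exists>a\<in>set xs. a \<in> fst T"
  by (induction xs rule: bigdisj.induct) (auto dest: is_type_pos_Or is_type_Bot_notin_pos)

lemma bigdisj_in_neg: "is_type S T \<Longrightarrow> bigdisj xs \<in> snd T \<Longrightarrow> set xs \<subseteq> snd T"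
  by (induction xs rule: bigdisj.induct) (auto dest: is_type_neg_Or)

lemma labelled_frame_type: "labelled_frame S W le lab \<Longrightarrow> w \<in> W \<Longrightarrow> is_type S (lab w)"
  unfolding labelled_frame_def by blast

lemma labelled_frame_refl: "labelled_frame S W le lab \<Longrightarrow> w \<in> W \<Longrightarrow> le w w"
  unfolding labelled_frame_def by blast

lemma labelled_frame_mono:
  "labelled_frame S W le lab \<Longrightarrow> v \<in> W \<Longrightarrow> w \<in> W \<Longrightarrow> le v w \<Longrightarrow> type_le (lab v) (lab w)"
  unfolding labelled_frame_def by blast

lemma labelled_frame_neg_Imp:
  "labelled_frame S W le lab \<Longrightarrow> w \<in> W \<Longrightarrow> Imp a b \<in> snd (lab w) \<Longrightarrow>
   \<exists>v\<in>W. le w v \<and> a \<in> fst (lab v) \<and> b \<in> snd (lab v)"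
  unfolding labelled_frame_def by blast

lemma labelled_frame_Top_notin_neg: "labelled_frame S W le lab \<Longrightarrow> w \<in> W \<Longrightarrow> Top \<notin> snd (lab w)"
  unfolding Top_def
  by (metis labelled_frame_neg_Imp labelled_frame_type is_type_Bot_notin_pos)

lemma labelled_frame_trans:
  "labelled_frame S W le lab \<Longrightarrow> u \<in> W \<Longrightarrow> v \<in> W \<Longrightarrow> w \<in> W \<Longrightarrow> le u v \<Longrightarrow> le v w \<Longrightarrow> le u w"
  unfolding labelled_frame_def by blast

lemma labelled_frame_antisym:
  "labelled_frame S W le lab \<Longrightarrow> v \<in> W \<Longrightarrow> w \<in> W \<Longrightarrow> le v w \<Longrightarrow> le w v \<Longrightarrow> v = w"
  unfolding labelled_frame_def by blast

lemma card_upset_less: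
  assumes F: "labelled_frame S W le lab" and "finite W" "w \<in> W" "v \<in> W" "le w v" "v \<noteq> w"
  shows "card {u\<in>W. le v u} < card {u\<in>W. le w u}"
proof (rule psubset_card_mono)
  have "{u\<in>W. le v u} \<subseteq> {u\<in>W. le w u}"
    using labelled_frame_trans[OF F \<open>w \<in> W\<close> \<open>v \<in> W\<close>] \<open>le w v\<close> by blast
  moreover have "w \<notin> {u\<in>W. le v u}"
    using labelled_frame_antisym[OF F \<open>v \<in> W\<close> \<open>w \<in> W\<close> _ \<open>le w v\<close>] \<open>v \<noteq> w\<close> by blast
  moreover have "w \<in> {u\<in>W. le w u}"
    using labelled_frame_refl[OF F \<open>w \<in> W\<close>] \<open>w \<in> W\<close> by blast
  ultimately show "{u\<in>W. le v u} \<subset> {u\<in>W. le w u}"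
    by blast
qed (use \<open>finite W\<close> in simp)

definition sim_form :: "form set \<Rightarrow> form set \<Rightarrow> form list \<Rightarrow> form" where
  "sim_form P N fs = Imp (bigconj (enum_set P)) (Or (bigdisj (enum_set N)) (bigdisj fs))"

definition sim_succs :: "nat \<Rightarrow> 'w set \<Rightarrow> ('w \<Rightarrow> 'w \<Rightarrow> bool) \<Rightarrow> ('w \<Rightarrow> ftype) \<Rightarrow> 'w \<Rightarrow> form list" where
  "sim_succs n W le lab w = (case n of
     0 \<Rightarrow> []
   | Suc m \<Rightarrow> map (sim_aux m W le lab) (enum_set {v\<in>W. le w v \<and> v \<noteq> w}))"

lemma sim_aux_eq_sim_form:
  "sim_aux n W le lab w = sim_form (fst (lab w)) (snd (lab w)) (sim_succs n W le lab w)"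
  by (cases n) (simp_all add: sim_form_def sim_succs_def)

lemma set_sim_succs:
  assumes "finite W"
  shows "set (sim_succs n W le lab w) =
    {sim_aux m W le lab v | m v. n = Suc m \<and> v \<in> W \<and> le w v \<and> v \<noteq> w}"
  using assms by (cases n) (auto simp: sim_succs_def set_enum_set)

lemma sim_form_in_neg:
  assumes X: "labelled_frame D X le lab" and "x \<in> X" "finite P" "finite N"
    and "sim_form P N fs \<in> snd (lab x)"
  obtains y where "y \<in> X" "le x y" "P \<subseteq> fst (lab y)" "N \<subseteq> snd (lab y)" "set fs \<subseteq> snd (lab y)"
proof -
  obtain y where y: "y \<in> X" "le x y" and
    pos: "bigconj (enum_set P) \<in> fst (lab y)" and
    neg: "Or (bigdisj (enum_set N)) (bigdisj fs) \<in> snd (lab y)"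
    using labelled_frame_neg_Imp[OF X \<open>x \<in> X\<close>] assms(5) unfolding sim_form_def by blast
  have T: "is_type D (lab y)"
    using labelled_frame_type[OF X \<open>y \<in> X\<close>] .
  have "bigdisj (enum_set N) \<in> snd (lab y)" and fs: "bigdisj fs \<in> snd (lab y)"
    using is_type_neg_Or[OF T neg] by auto
  then have "N \<subseteq> snd (lab y)"
    using bigdisj_in_neg[OF T] set_enum_set[OF \<open>finite N\<close>] by metis
  moreover have "P \<subseteq> fst (lab y)"
    using bigconj_in_pos[OF T pos] set_enum_set[OF \<open>finite P\<close>] by simp
  ultimately show thesis
    using that y bigdisj_in_neg[OF T fs] by blast
qed

lemma sim_form_in_pos:
  assumes X: "labelled_frame D X le lab" and "y \<in> X" "finite P" "finite N"
    and P: "P \<subseteq> fst (lab y)" and N: "N \<subseteq> snd (lab y)"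
    and "sim_form P N fs \<in> fst (lab y)"
  shows "\<exists>f\<in>set fs. f \<in> fst (lab y)"
proof -
  have T: "is_type D (lab y)"
    using labelled_frame_type[OF X \<open>y \<in> X\<close>] .
  then have disjoint: "snd (lab y) \<inter> fst (lab y) = {}"
    by (rule is_type_disjoint)
  have "bigconj (enum_set P) \<notin> snd (lab y)"
  proof
    assume conj: "bigconj (enum_set P) \<in> snd (lab y)"
    show False
    proof (cases "enum_set P = []")
      case True
      then show False
        using conj labelled_frame_Top_notin_neg[OF X \<open>y \<in> X\<close>] by simp
    next
      case False
      then show False
        using bigconj_in_neg[OF T False conj] P disjoint set_enum_set[OF \<open>finite P\<close>] by blast
    qed
  qed
  moreover have "bigdisj (enum_set N) \<notin> fst (lab y)"
    using bigdisj_in_pos[OF T] N disjoint set_enum_set[OF \<open>finite N\<close>] by blast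
  ultimately have "bigdisj fs \<in> fst (lab y)"
    using \<open>sim_form P N fs \<in> fst (lab y)\<close> is_type_pos_Imp[OF T] is_type_pos_Or[OF T]
    unfolding sim_form_def by blast
  then show ?thesis
    using bigdisj_in_pos[OF T] by blast
qed

lemma simulation_subset: "simulation W leW labW X leX labX E \<Longrightarrow> E \<subseteq> W \<times> X"
  unfolding simulation_def by blast

lemma simulation_type_sub:
  "simulation W leW labW X leX labX E \<Longrightarrow> (w, y) \<in> E \<Longrightarrow> type_sub (labW w) (labX y)"
  unfolding simulation_def by blast

lemma simulation_forward:
  "simulation W leW labW X leX labX E \<Longrightarrow> (w, y) \<in> E \<Longrightarrow> w' \<in> W \<Longrightarrow> leW w w' \<Longrightarrow>
   \<exists>y'\<in>X. leX y y' \<and> (w', y') \<in> E"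
  unfolding simulation_def by blast

lemma simulation_UN:
  assumes "\<And>i. i \<in> I \<Longrightarrow> simulation W leW labW X leX labX (F i)"
  shows "simulation W leW labW X leX labX (\<Union>i\<in>I. F i)"
  using assms unfolding simulation_def by (auto 0 0) blast+

lemma simulation_insert:
  assumes U: "simulation W leW labW X leX labX U"
    and "w \<in> W" "y \<in> X" "type_sub (labW w) (labX y)"
    and fwd: "\<And>w'. w' \<in> W \<Longrightarrow> leW w w' \<Longrightarrow> \<exists>y'\<in>X. leX y y' \<and> (w', y') \<in> insert (w, y) U"
  shows "simulation W leW labW X leX labX (insert (w, y) U)"
proof -
  have forward: "\<exists>b'\<in>X. leX b b' \<and> (a', b') \<in> insert (w, y) U"
    if ab: "(a, b) \<in> insert (w, y) U" and "a' \<in> W" "leW a a'" for a b a'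
  proof (cases "(a, b) = (w, y)")
    case True
    then show ?thesis
      using fwd \<open>a' \<in> W\<close> \<open>leW a a'\<close> by simp
  next
    case False
    then have "(a, b) \<in> U"
      using ab by blast
    then show ?thesis
      using simulation_forward[OF U _ \<open>a' \<in> W\<close> \<open>leW a a'\<close>] by blast
  qed
  show ?thesis
    unfolding simulation_def
  proof (intro conjI)
    show "insert (w, y) U \<subseteq> W \<times> X"
      using simulation_subset[OF U] assms(2,3) by blast
    show "\<forall>(a, b)\<in>insert (w, y) U. type_sub (labW a) (labX b)"
      using simulation_type_sub[OF U] assms(4) by blast
  qed (use forward in blast)
qed

lemma simulates_from_successors:
  assumes "w \<in> W" "y \<in> X" "leX y y" and lab: "type_sub (labW w) (labX y)"
    and succs: "\<And>v. v \<in> W \<Longrightarrow> leW w v \<Longrightarrow> v \<noteq> w \<Longrightarrow>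
      \<exists>z\<in>X. leX y z \<and> simulates W leW labW v X leX labX z"
  shows "simulates W leW labW w X leX labX y"
proof -
  let ?V = "{v\<in>W. leW w v \<and> v \<noteq> w}"
  have "\<forall>v\<in>?V. \<exists>z Ev. z \<in> X \<and> leX y z \<and> simulation W leW labW X leX labX Ev \<and> (v, z) \<in> Ev"
    using succs unfolding simulates_def by blast
  then obtain z Ev where z: "\<And>v. v \<in> ?V \<Longrightarrow> z v \<in> X \<and> leX y (z v) \<and>
      simulation W leW labW X leX labX (Ev v) \<and> (v, z v) \<in> Ev v"
    by metis
  let ?U = "\<Union>v\<in>?V. Ev v"
  have U: "simulation W leW labW X leX labX ?U"
    using z by (blast intro: simulation_UN)
  have "simulation W leW labW X leX labX (insert (w, y) ?U)"
  proof (rule simulation_insert[where labW = labW and labX = labX, OF U assms(1,2) lab])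
    fix w' assume "w' \<in> W" "leW w w'"
    show "\<exists>y'\<in>X. leX y y' \<and> (w', y') \<in> insert (w, y) ?U"
    proof (cases "w' = w")
      case True
      then show ?thesis
        using assms(2,3) by blast
    next
      case False
      then show ?thesis
        using z[of w'] \<open>w' \<in> W\<close> \<open>leW w w'\<close> by blast
    qed
  qed
  then show ?thesis
    unfolding simulates_def by blast
qed

lemma sim_aux_in_neg_imp_simulates:
  assumes W: "labelled_frame S W leW labW" and X: "labelled_frame D X leX labX"
    and "finite W" "w \<in> W" "x \<in> X"
    and "card {v\<in>W. leW w v} \<le> Suc n" and "sim_aux n W leW labW w \<in> snd (labX x)"
  shows "\<exists>y\<in>X. leX x y \<and> simulates W leW labW w X leX labX y"
  using assms(4-)
proof (induction n arbitrary: w x rule: less_induct)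
  case (less n)
  have fin: "finite (fst (labW w))" "finite (snd (labW w))"
    using is_type_finite[OF labelled_frame_type[OF W \<open>w \<in> W\<close>]] by auto
  obtain y where y: "y \<in> X" "leX x y"
    and "fst (labW w) \<subseteq> fst (labX y)" "snd (labW w) \<subseteq> snd (labX y)"
    and succs: "set (sim_succs n W leW labW w) \<subseteq> snd (labX y)"
    using sim_form_in_neg[OF X \<open>x \<in> X\<close> fin less.prems(4)[unfolded sim_aux_eq_sim_form]] .
  then have lab: "type_sub (labW w) (labX y)"
    by (simp add: type_sub_def)
  have "\<exists>z\<in>X. leX y z \<and> simulates W leW labW v X leX labX z"
    if v: "v \<in> W" "leW w v" "v \<noteq> w" for v
  proof -
    have less_card: "card {u\<in>W. leW v u} < card {u\<in>W. leW w u}"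
      using card_upset_less[OF W \<open>finite W\<close> \<open>w \<in> W\<close> v] .
    moreover have "card {u\<in>W. leW v u} > 0"
      using labelled_frame_refl[OF W \<open>v \<in> W\<close>] v \<open>finite W\<close> by (auto simp: card_gt_0_iff)
    ultimately obtain m where m: "n = Suc m"
      using less.prems(3) by (cases n) auto
    then have "sim_aux m W leW labW v \<in> snd (labX y)"
      using succs v set_sim_succs[OF \<open>finite W\<close>] by blast
    then show ?thesis
      using less.IH[of m v y] less.prems(3) less_card m v y(1) by simp
  qed
  then have "simulates W leW labW w X leX labX y"
    by (rule simulates_from_successors[where leX = leX and labW = labW and labX = labX,
          OF less.prems(1) y(1) labelled_frame_refl[OF X y(1)] lab])
  then show ?case
    using y by blast
qed

lemma simulation_imp_sim_aux_notin_pos: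
  assumes W: "labelled_frame S W leW labW" and X: "labelled_frame D X leX labX"
    and "finite W" and E: "simulation W leW labW X leX labX E" and "(w, y) \<in> E"
  shows "sim_aux n W leW labW w \<notin> fst (labX y)"
  using \<open>(w, y) \<in> E\<close>
proof (induction n arbitrary: w y rule: less_induct)
  case (less n)
  have "w \<in> W" "y \<in> X" and lab: "type_sub (labW w) (labX y)"
    using simulation_subset[OF E] simulation_type_sub[OF E] less.prems by auto
  have fin: "finite (fst (labW w))" "finite (snd (labW w))"
    using is_type_finite[OF labelled_frame_type[OF W \<open>w \<in> W\<close>]] by auto
  show ?case
  proof
    assume "sim_aux n W leW labW w \<in> fst (labX y)"
    then obtain f where f: "f \<in> set (sim_succs n W leW labW w)" "f \<in> fst (labX y)"
      using sim_form_in_pos[OF X \<open>y \<in> X\<close> fin] lab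
      unfolding sim_aux_eq_sim_form type_sub_def by blast
    then obtain m v where m: "n = Suc m" and v: "v \<in> W" "leW w v"
      and f_eq: "f = sim_aux m W leW labW v"
      using set_sim_succs[OF \<open>finite W\<close>] by blast
    obtain y' where y': "y' \<in> X" "leX y y'" "(v, y') \<in> E"
      using simulation_forward[OF E less.prems v] by blast
    have "f \<in> fst (labX y')"
      using labelled_frame_mono[OF X \<open>y \<in> X\<close> y'(1,2)] f(2) unfolding type_le_def by blast
    then show False
      using less.IH[of m v y'] m y'(3) f_eq by simp
  qed
qed

theorem proposition6p4:
  fixes S D :: "form set"
    and W :: "'w set" and leW :: "'w \<Rightarrow> 'w \<Rightarrow> bool" and labW :: "'w \<Rightarrow> ftype"
    and X :: "'x set" and leX :: "'x \<Rightarrow> 'x \<Rightarrow> bool" and labX :: "'x \<Rightarrow> ftype"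
    and w :: 'w and x :: 'x
  assumes "S \<subseteq> D" and "finite S" and "subf_closed S" and "subf_closed D"
    and "finite W" and "labelled_frame S W leW labW"
    and "labelled_frame D X leX labX"
    and "w \<in> W" and "x \<in> X"
  shows "(Sim W leW labW w \<in> snd (labX x) \<longrightarrow>
            (\<exists>y\<in>X. leX x y \<and> simulates W leW labW w X leX labX y))
       \<and> ((\<exists>y\<in>X. leX x y \<and> simulates W leW labW w X leX labX y) \<longrightarrow>
            Sim W leW labW w \<notin> fst (labX x))"
proof (intro conjI impI)
  assume neg: "Sim W leW labW w \<in> snd (labX x)"
  have "card {v\<in>W. leW w v} \<le> Suc (card W)"
    using \<open>finite W\<close> by (simp add: card_mono le_SucI)
  then show "\<exists>y\<in>X. leX x y \<and> simulates W leW labW w X leX labX y"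
    using sim_aux_in_neg_imp_simulates[OF assms(6,7,5,8,9)] neg unfolding Sim_def by blast
next
  assume "\<exists>y\<in>X. leX x y \<and> simulates W leW labW w X leX labX y"
  then obtain y E where y: "y \<in> X" "leX x y"
    and E: "simulation W leW labW X leX labX E" "(w, y) \<in> E"
    unfolding simulates_def by blast
  have "Sim W leW labW w \<notin> fst (labX y)"
    using simulation_imp_sim_aux_notin_pos[OF assms(6,7,5) E] unfolding Sim_def .
  moreover have "type_le (labX x) (labX y)"
    using labelled_frame_mono[OF assms(7,9) y] .
  ultimately show "Sim W leW labW w \<notin> fst (labX x)"
    by (auto simp: type_le_def)
qed

end
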